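(* Let $\mathcal{G}:H\rtimes G\rightrightarrows G$ be a Lie 2-group with Lie 2-algebra $\mathfrak{G}:\mathfrak{h}\rtimes\mathfrak{g}\rightrightarrows\mathfrak{g}$ given by the crossed module $\phi:\mathfrak{h}\to\mathfrak{g}$. Then the groupoid $\mathfrak{G}^*:(\mathfrak{h}\rtimes\mathfrak{g})^*\rightrightarrows\mathfrak{h}^*$, with group structure given by vector addition and with the Lie–Poisson structure on $(\mathfrak{h}\rtimes\mathfrak{g})^*$, is a Poisson 2-group.
   Context: A Lie 2-group is a groupoid object in the category of Lie groups; it is described by a crossed module of Lie groups, with arrow group $H\rtimes G$ (where $H=\ker\mathtt{s}$) and object group $G$. Its Lie 2-algebra is the action groupoid $\mathfrak{h}\rtimes\mathfrak{g}\rightrightarrows\mathfrak{g}$ of the crossed module of Lie algebras $\phi:\mathfrak{h}\to\mathfrak{g}$, with source $(a,x)\mapsto x$ and target $(a,x)\mapsto\phi(a)+x$. The groupoid $\mathfrak{G}^*$ has arrows $(\mathfrak{h}\rtimes\mathfrak{g})^*\cong\mathfrak{h}^*\times\mathfrak{g}^*$, objects $\mathfrak{h}^*$, source $\mathtt{s}(\alpha,\theta)=\alpha-\phi^*(\theta)$, target $\mathtt{t}(\alpha,\theta)=\alpha$, and multiplication $(\alpha,\theta)\cdot(\alpha-\phi^*\theta,\theta')=(\alpha,\theta+\theta')$ (the action groupoid of $\mathfrak{g}^*$ acting on $\mathfrak{h}^*$ by translations via $-\phi^*$, with source and target reversed). The Lie–Poisson structure on the dual $\mathfrak{k}^*$ of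 a Lie algebra $\mathfrak{k}$ is $\{f,g\}(\xi)=\langle\xi,[df_\xi,dg_\xi]\rangle$. A Poisson groupoid is a Lie groupoid with a Poisson structure on its arrows whose multiplication graph is coisotropic in $M_1\times M_1\times\overline{M_1}$; a Poisson 2-group is a Lie 2-group that is a Poisson groupoid and whose arrow group is a Poisson–Lie group with the same bivector. *)

theory Defs
  imports "HOL-Analysis.Analysis"
begin

text \<open>All vector spaces are finite-dimensional real spaces, modelled by types
of class euclidean_space. The dual of such a space V is identified with V itself through the
inner product, so a covector at a point is a vector, the differential of a function at a point
is its gradient, and the dual map of a linear map is its adjoint.\<close>

definition grad :: "('a::euclidean_space \<Rightarrow> real) \<Rightarrow> 'a \<Rightarrow> 'a" where
  "grad f x = (\<Sum>b\<in>Basis. frechet_derivative f (at x) b *\<^sub>R b)"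

coinductive smooth_fun :: "('a::euclidean_space \<Rightarrow> real) \<Rightarrow> bool" where
  "(\<forall>x. f differentiable (at x)) \<Longrightarrow>
   (\<forall>b\<in>Basis. smooth_fun (\<lambda>x. frechet_derivative f (at x) b)) \<Longrightarrow> smooth_fun f"

definition lie_algebra :: "('a::euclidean_space \<Rightarrow> 'a \<Rightarrow> 'a) \<Rightarrow> bool" where
  "lie_algebra br \<longleftrightarrow> bilinear br \<and> (\<forall>x. br x x = 0) \<and>
     (\<forall>x y z. br x (br y z) + br y (br z x) + br z (br x y) = 0)"

definition crossed_module ::
  "('h::euclidean_space \<Rightarrow> 'h \<Rightarrow> 'h) \<Rightarrow> ('g::euclidean_space \<Rightarrow> 'g \<Rightarrow> 'g) \<Rightarrow> ('h \<Rightarrow> 'g)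
   \<Rightarrow> ('g \<Rightarrow> 'h \<Rightarrow> 'h) \<Rightarrow> bool" where
  "crossed_module bh bg \<phi> \<rho> \<longleftrightarrow>
     lie_algebra bh \<and> lie_algebra bg \<and>
     linear \<phi> \<and> (\<forall>a b. \<phi> (bh a b) = bg (\<phi> a) (\<phi> b)) \<and>
     bilinear \<rho> \<and>
     (\<forall>x y a. \<rho> (bg x y) a = \<rho> x (\<rho> y a) - \<rho> y (\<rho> x a)) \<and>
     (\<forall>x a b. \<rho> x (bh a b) = bh (\<rho> x a) b + bh a (\<rho> x b)) \<and>
     (\<forall>x a. \<phi> (\<rho> x a) = bg x (\<phi> a)) \<and>
     (\<forall>a b. \<rho> (\<phi> a) b = bh a b)"

definition semidirect_bracket ::
  "('h::euclidean_space \<Rightarrow> 'h \<Rightarrow> 'h) \<Rightarrow> ('g::euclidean_space \<Rightarrow> 'g \<Rightarrow> 'g) \<Rightarrow> ('g \<Rightarrow> 'h \<Rightarrow> 'h)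
   \<Rightarrow> 'h \<times> 'g \<Rightarrow> 'h \<times> 'g \<Rightarrow> 'h \<times> 'g" where
  "semidirect_bracket bh bg \<rho> u v =
     (bh (fst u) (fst v) + \<rho> (snd u) (fst v) - \<rho> (snd v) (fst u), bg (snd u) (snd v))"

text \<open>Bivector fields: P x is a bilinear form on covectors at x. Induced bracket of functions.\<close>
definition pbracket :: "('a::euclidean_space \<Rightarrow> 'a \<Rightarrow> 'a \<Rightarrow> real)
    \<Rightarrow> ('a \<Rightarrow> real) \<Rightarrow> ('a \<Rightarrow> real) \<Rightarrow> 'a \<Rightarrow> real" where
  "pbracket P f g x = P x (grad f x) (grad g x)"

text \<open>Lie-Poisson bivector on the dual k* (identified with k): {f,g}(xi) = <xi,[df_xi,dg_xi]>.\<close>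
definition lie_poisson :: "('k::euclidean_space \<Rightarrow> 'k \<Rightarrow> 'k) \<Rightarrow> 'k \<Rightarrow> 'k \<Rightarrow> 'k \<Rightarrow> real" where
  "lie_poisson br \<xi> u v = \<xi> \<bullet> br u v"

definition poisson_structure :: "('a::euclidean_space \<Rightarrow> 'a \<Rightarrow> 'a \<Rightarrow> real) \<Rightarrow> bool" where
  "poisson_structure P \<longleftrightarrow>
     (\<forall>x. bilinear (P x) \<and> (\<forall>u v. P x u v = - P x v u)) \<and>
     (\<forall>f g. smooth_fun f \<and> smooth_fun g \<longrightarrow> smooth_fun (pbracket P f g)) \<and>
     (\<forall>f g h. smooth_fun f \<and> smooth_fun g \<and> smooth_fun h \<longrightarrow>
        (\<forall>x. pbracket P f (pbracket P g h) x + pbracket P g (pbracket P h f) x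
              + pbracket P h (pbracket P f g) x = 0))"

text \<open>Product Poisson structure on M \<times> M, and on M \<times> M \<times> M-bar (opposite structure on the
third factor).\<close>
definition prod_bivector :: "('a::euclidean_space \<Rightarrow> 'a \<Rightarrow> 'a \<Rightarrow> real)
    \<Rightarrow> 'a \<times> 'a \<Rightarrow> 'a \<times> 'a \<Rightarrow> 'a \<times> 'a \<Rightarrow> real" where
  "prod_bivector P x u v = P (fst x) (fst u) (fst v) + P (snd x) (snd u) (snd v)"

definition triple_bar_bivector :: "('a::euclidean_space \<Rightarrow> 'a \<Rightarrow> 'a \<Rightarrow> real)
    \<Rightarrow> 'a \<times> 'a \<times> 'a \<Rightarrow> 'a \<times> 'a \<times> 'a \<Rightarrow> 'a \<times> 'a \<times> 'a \<Rightarrow> real" where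
  "triple_bar_bivector P x u v =
     P (fst x) (fst u) (fst v) + P (fst (snd x)) (fst (snd u)) (fst (snd v))
     - P (snd (snd x)) (snd (snd u)) (snd (snd v))"

definition coisotropic :: "('a::euclidean_space \<Rightarrow> 'a \<Rightarrow> 'a \<Rightarrow> real) \<Rightarrow> 'a set \<Rightarrow> bool" where
  "coisotropic P C \<longleftrightarrow>
     (\<forall>f g. smooth_fun f \<and> smooth_fun g \<and> (\<forall>c\<in>C. f c = 0) \<and> (\<forall>c\<in>C. g c = 0) \<longrightarrow>
        (\<forall>c\<in>C. pbracket P f g c = 0))"

definition poisson_map :: "('a::euclidean_space \<Rightarrow> 'a \<Rightarrow> 'a \<Rightarrow> real)
    \<Rightarrow> ('b::euclidean_space \<Rightarrow> 'b \<Rightarrow> 'b \<Rightarrow> real) \<Rightarrow> ('a \<Rightarrow> 'b) \<Rightarrow> bool" where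
  "poisson_map P Q F \<longleftrightarrow>
     (\<forall>f g. smooth_fun f \<and> smooth_fun g \<longrightarrow>
        (\<forall>x. pbracket P (f \<circ> F) (g \<circ> F) x = pbracket Q f g (F x)))"

text \<open>A Lie groupoid M1 \<rightrightarrows> M0 (arrows 'r, objects 'o, both vector spaces) with source s,
target t, unit e, multiplication m (defined on composable pairs, s p = t q) and inverse i,
which is a Lie 2-group for the additive group structures: all structure maps are
(smooth) group homomorphisms, i.e. linear; s and t are submersions (surjective linear).\<close>
definition linear_lie_2group ::
  "('r::euclidean_space \<Rightarrow> 'o::euclidean_space) \<Rightarrow> ('r \<Rightarrow> 'o) \<Rightarrow> ('o \<Rightarrow> 'r)
   \<Rightarrow> ('r \<Rightarrow> 'r \<Rightarrow> 'r) \<Rightarrow> ('r \<Rightarrow> 'r) \<Rightarrow> bool" where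
  "linear_lie_2group s t e m i \<longleftrightarrow>
     (\<forall>p q. s p = t q \<longrightarrow> s (m p q) = s q \<and> t (m p q) = t p) \<and>
     (\<forall>p q r. s p = t q \<and> s q = t r \<longrightarrow> m (m p q) r = m p (m q r)) \<and>
     (\<forall>x. s (e x) = x \<and> t (e x) = x) \<and>
     (\<forall>p. m (e (t p)) p = p \<and> m p (e (s p)) = p) \<and>
     (\<forall>p. s (i p) = t p \<and> t (i p) = s p \<and> m p (i p) = e (t p) \<and> m (i p) p = e (s p)) \<and>
     linear s \<and> linear t \<and> linear e \<and> linear i \<and> surj s \<and> surj t \<and>
     (\<forall>p q p' q'. s p = t q \<and> s p' = t q' \<longrightarrow> m (p + p') (q + q') = m p q + m p' q') \<and>
     (\<forall>c p q. s p = t q \<longrightarrow> m (c *\<^sub>R p) (c *\<^sub>R q) = c *\<^sub>R m p q)"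

text \<open>Poisson 2-group: Lie 2-group which is a Poisson groupoid (Poisson structure P on the arrows,
graph of multiplication coisotropic in M1 \<times> M1 \<times> M1-bar) and whose arrow group (vector addition)
is a Poisson-Lie group with the same bivector (addition is a Poisson map).\<close>
definition linear_poisson_2group ::
  "('r::euclidean_space \<Rightarrow> 'o::euclidean_space) \<Rightarrow> ('r \<Rightarrow> 'o) \<Rightarrow> ('o \<Rightarrow> 'r)
   \<Rightarrow> ('r \<Rightarrow> 'r \<Rightarrow> 'r) \<Rightarrow> ('r \<Rightarrow> 'r) \<Rightarrow> ('r \<Rightarrow> 'r \<Rightarrow> 'r \<Rightarrow> real) \<Rightarrow> bool" where
  "linear_poisson_2group s t e m i P \<longleftrightarrow>
     linear_lie_2group s t e m i \<and>
     poisson_structure P \<and>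
     coisotropic (triple_bar_bivector P) {(p, q, m p q) | p q. s p = t q} \<and>
     poisson_map (prod_bivector P) P (\<lambda>pq. fst pq + snd pq)"

end

theory Submission
  imports Defs
begin

text \<open>The Lie-Poisson bivector is linear in the base point, so the Jacobi identity of the
  bracket of functions reduces to the Jacobi identity of the Lie bracket, the terms with second
  derivatives cancelling by the symmetry of the Hessian; linearity also makes addition a
  Poisson map. The graph of the multiplication of the dual groupoid is a linear subspace, so
  the differentials of functions vanishing on it lie in its annihilator, which is computed
  explicitly; the bivector vanishes on pairs of such covectors by the crossed module
  identities, which gives coisotropy.\<close>

section \<open>Smooth functions\<close>

lemma smooth_fun_has_derivative:
  assumes "smooth_fun f"
  shows "(f has_derivative frechet_derivative f (at x)) (at x)"
  using assms by (cases rule: smooth_fun.cases) (auto simp: frechet_derivative_works)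

lemma smooth_fun_partial:
  assumes "smooth_fun f" and "b \<in> Basis"
  shows "smooth_fun (\<lambda>x. frechet_derivative f (at x) b)"
  using assms by (cases rule: smooth_fun.cases) auto

text \<open>Closure properties of smooth functions are proved by coinduction up to the algebra
  generated by smooth and linear functions.\<close>

inductive smooth_generated :: "('a::euclidean_space \<Rightarrow> real) \<Rightarrow> bool" where
  smooth: "smooth_fun f \<Longrightarrow> smooth_generated f"
| const: "smooth_generated (\<lambda>x. c)"
| linear: "linear l \<Longrightarrow> smooth_generated l"
| add: "smooth_generated f \<Longrightarrow> smooth_generated g \<Longrightarrow> smooth_generated (\<lambda>x. f x + g x)"
| mult: "smooth_generated f \<Longrightarrow> smooth_generated g \<Longrightarrow> smooth_generated (\<lambda>x. f x * g x)"

lemma smooth_generated_partials: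
  assumes "smooth_generated f"
  shows "(\<forall>x. f differentiable (at x)) \<and>
    (\<forall>b\<in>Basis. smooth_generated (\<lambda>x. frechet_derivative f (at x) b))"
  using assms
proof induction
  case (smooth f)
  then show ?case
    by (auto intro: smooth_generated.smooth smooth_fun_partial smooth_fun_has_derivative
        differentiableI)
next
  case (const c)
  have "frechet_derivative (\<lambda>x. c) (at x) = (\<lambda>_. 0)" for x
    by (rule frechet_derivative_at[symmetric]) simp
  then show ?case by (auto intro: smooth_generated.const)
next
  case (linear l)
  then have "(l has_derivative l) (at x)" for x
    by (simp add: bounded_linear_imp_has_derivative linear_conv_bounded_linear)
  then have "frechet_derivative l (at x) = l" and "l differentiable (at x)" for x
    by (auto intro: frechet_derivative_at[symmetric] differentiableI)
  then show ?case by (auto intro: smooth_generated.const)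
next
  case (add f g)
  have D: "((\<lambda>x. f x + g x) has_derivative
      (\<lambda>h. frechet_derivative f (at x) h + frechet_derivative g (at x) h)) (at x)" for x
    using add.IH by (intro has_derivative_add) (auto simp: frechet_derivative_works[symmetric])
  then have "frechet_derivative (\<lambda>x. f x + g x) (at x) =
      (\<lambda>h. frechet_derivative f (at x) h + frechet_derivative g (at x) h)" for x
    by (rule frechet_derivative_at[symmetric])
  then show ?case
    using D add.IH by (auto intro: differentiableI intro!: smooth_generated.add)
next
  case (mult f g)
  have D: "((\<lambda>x. f x * g x) has_derivative
      (\<lambda>h. f x * frechet_derivative g (at x) h + frechet_derivative f (at x) h * g x)) (at x)" for x
    using mult.IH by (intro has_derivative_mult) (auto simp: frechet_derivative_works[symmetric])
  then have "frechet_derivative (\<lambda>x. f x * g x) (at x) =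
      (\<lambda>h. f x * frechet_derivative g (at x) h + frechet_derivative f (at x) h * g x)" for x
    by (rule frechet_derivative_at[symmetric])
  then show ?case
    using D mult.IH mult.hyps by (auto intro: differentiableI
        intro!: smooth_generated.add smooth_generated.mult)
qed

lemma smooth_generated_imp_smooth_fun: "smooth_generated f \<Longrightarrow> smooth_fun f"
proof (coinduction arbitrary: f rule: smooth_fun.coinduct)
  case (smooth_fun f)
  then show ?case using smooth_generated_partials[OF smooth_fun] by fastforce
qed

lemma smooth_fun_linear: "linear l \<Longrightarrow> smooth_fun l"
  by (rule smooth_generated_imp_smooth_fun, rule smooth_generated.linear)

lemma smooth_fun_mult: "smooth_fun f \<Longrightarrow> smooth_fun g \<Longrightarrow> smooth_fun (\<lambda>x. f x * g x)"
  by (rule smooth_generated_imp_smooth_fun) (auto intro: smooth_generated.intros)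

lemma smooth_fun_sum:
  assumes "finite A" and "\<And>i. i \<in> A \<Longrightarrow> smooth_fun (f i)"
  shows "smooth_fun (\<lambda>x. \<Sum>i\<in>A. f i x)"
proof -
  have "smooth_generated (\<lambda>x. \<Sum>i\<in>A. f i x)"
    using assms
  proof (induction A rule: finite_induct)
    case (insert i A)
    then show ?case by (simp add: smooth_generated.add smooth_generated.smooth)
  qed (simp add: smooth_generated.const)
  then show ?thesis by (rule smooth_generated_imp_smooth_fun)
qed

section \<open>Symmetry of second derivatives\<close>

lemma has_derivative_along_line:
  fixes f :: "'a::euclidean_space \<Rightarrow> real"
  assumes "\<forall>y. (f has_derivative F y) (at y)"
  shows "((\<lambda>s. f (x + s *\<^sub>R u)) has_derivative (\<lambda>h. h * F (x + s *\<^sub>R u) u)) (at s within S)"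
proof -
  have lin: "linear (F (x + s *\<^sub>R u))" using assms has_derivative_linear by blast
  have i: "((\<lambda>s. x + s *\<^sub>R u) has_derivative (\<lambda>h. h *\<^sub>R u)) (at s within S)"
    by (auto intro!: derivative_eq_intros)
  have "((\<lambda>s. f (x + s *\<^sub>R u)) has_derivative (\<lambda>h. F (x + s *\<^sub>R u) (h *\<^sub>R u))) (at s within S)"
    using has_derivative_compose[OF i] assms by blast
  moreover have "(\<lambda>h. F (x + s *\<^sub>R u) (h *\<^sub>R u)) = (\<lambda>h. h * F (x + s *\<^sub>R u) u)"
    using linear_scale[OF lin] by auto
  ultimately show ?thesis by simp
qed

lemma mvt_along_line:
  fixes f :: "'a::euclidean_space \<Rightarrow> real"
  assumes "\<forall>y. (f has_derivative F y) (at y)" "0 < t"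
  shows "\<exists>\<sigma>\<in>{0<..<t}. f (x + t *\<^sub>R u) - f x = t * F (x + \<sigma> *\<^sub>R u) u"
proof -
  have "\<exists>\<sigma>\<in>{0<..<t}. f (x + t *\<^sub>R u) - f (x + 0 *\<^sub>R u) = (t - 0) * F (x + \<sigma> *\<^sub>R u) u"
    by (rule mvt_simple[OF assms(2), of "\<lambda>s. f (x + s *\<^sub>R u)" "\<lambda>s h. h * F (x + s *\<^sub>R u) u"])
       (rule has_derivative_along_line[OF assms(1)])
  then show ?thesis by simp
qed

lemma mvt_second_difference:
  fixes f :: "'a::euclidean_space \<Rightarrow> real"
  assumes f: "\<forall>y. (f has_derivative F y) (at y)"
    and A: "\<forall>y. ((\<lambda>y. F y u) has_derivative GA y) (at y)" and t: "0 < t"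
  shows "\<exists>\<sigma> \<rho>. 0 < \<sigma> \<and> \<sigma> < t \<and> 0 < \<rho> \<and> \<rho> < t \<and>
    f (x + t *\<^sub>R u + t *\<^sub>R v) - f (x + t *\<^sub>R u) - f (x + t *\<^sub>R v) + f x
      = t * t * GA (x + \<sigma> *\<^sub>R u + \<rho> *\<^sub>R v) v"
proof -
  define \<delta> where "\<delta> s = f (x + s *\<^sub>R u + t *\<^sub>R v) - f (x + s *\<^sub>R u)" for s
  define \<delta>' where "\<delta>' s = F (x + s *\<^sub>R u + t *\<^sub>R v) u - F (x + s *\<^sub>R u) u" for s
  have "((\<lambda>s. f (x + t *\<^sub>R v + s *\<^sub>R u) - f (x + s *\<^sub>R u)) has_derivative
      (\<lambda>h. h * F (x + t *\<^sub>R v + s *\<^sub>R u) u - h * F (x + s *\<^sub>R u) u)) (at s within S)" for s S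
    by (intro has_derivative_diff has_derivative_along_line f)
  then have "(\<delta> has_derivative (\<lambda>h. h * \<delta>' s)) (at s within S)" for s S
    unfolding \<delta>_def \<delta>'_def by (simp add: algebra_simps)
  then obtain \<sigma> where \<sigma>: "\<sigma> \<in> {0<..<t}" and e1: "\<delta> t - \<delta> 0 = (t - 0) * \<delta>' \<sigma>"
    using mvt_simple[OF t, of \<delta> "\<lambda>s h. h * \<delta>' s"] by blast
  obtain \<rho> where \<rho>: "\<rho> \<in> {0<..<t}" and e2: "\<delta>' \<sigma> = t * GA (x + \<sigma> *\<^sub>R u + \<rho> *\<^sub>R v) v"
    using mvt_along_line[OF A t, of "x + \<sigma> *\<^sub>R u" v] by (auto simp: \<delta>'_def)
  have "f (x + t *\<^sub>R u + t *\<^sub>R v) - f (x + t *\<^sub>R u) - f (x + t *\<^sub>R v) + f x = \<delta> t - \<delta> 0"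
    unfolding \<delta>_def by simp
  also have "\<dots> = t * t * GA (x + \<sigma> *\<^sub>R u + \<rho> *\<^sub>R v) v" using e1 e2 by simp
  finally show ?thesis using \<sigma> \<rho> by auto
qed

lemma dist_add_two_scaled_le:
  assumes "0 \<le> \<sigma>" and "0 \<le> \<rho>"
  shows "dist (x + \<sigma> *\<^sub>R u + \<rho> *\<^sub>R v) x \<le> \<sigma> * norm u + \<rho> * norm v"
  using norm_triangle_ineq[of "\<sigma> *\<^sub>R u" "\<rho> *\<^sub>R v"] assms by (simp add: dist_norm add.assoc)

lemma partial_derivatives_commute:
  fixes f :: "'a::euclidean_space \<Rightarrow> real"
  assumes f: "\<forall>y. (f has_derivative F y) (at y)"
    and A: "\<forall>y. ((\<lambda>y. F y u) has_derivative GA y) (at y)"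
    and B: "\<forall>y. ((\<lambda>y. F y v) has_derivative GB y) (at y)"
    and cA: "continuous (at x) (\<lambda>y. GA y v)" and cB: "continuous (at x) (\<lambda>y. GB y u)"
  shows "GA x v = GB x u"
proof (rule ccontr)
  assume "GA x v \<noteq> GB x u"
  define e where "e = \<bar>GA x v - GB x u\<bar> / 2"
  have "e > 0" using \<open>GA x v \<noteq> GB x u\<close> by (simp add: e_def)
  obtain d where "d > 0" and dA: "\<forall>y. dist y x < d \<longrightarrow> dist (GA y v) (GA x v) < e"
    and dB: "\<forall>y. dist y x < d \<longrightarrow> dist (GB y u) (GB x u) < e"
  proof -
    obtain d1 where "d1 > 0" "\<forall>y. dist y x < d1 \<longrightarrow> dist (GA y v) (GA x v) < e"
      using cA \<open>e > 0\<close> unfolding continuous_at_eps_delta by blast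
    moreover obtain d2 where "d2 > 0" "\<forall>y. dist y x < d2 \<longrightarrow> dist (GB y u) (GB x u) < e"
      using cB \<open>e > 0\<close> unfolding continuous_at_eps_delta by blast
    ultimately show thesis by (intro that[of "min d1 d2"]) auto
  qed
  define t where "t = d / (norm u + norm v + 1)"
  have "norm u + norm v + 1 > 0" by (intro add_nonneg_pos) auto
  then have "t > 0" using \<open>d > 0\<close> by (simp add: t_def)
  have near: "dist (x + \<sigma> *\<^sub>R w + \<rho> *\<^sub>R w') x < d"
    if "0 < \<sigma>" "\<sigma> < t" "0 < \<rho>" "\<rho> < t" "{w, w'} = {u, v}" for \<sigma> \<rho> w w'
  proof -
    have "\<sigma> * norm w + \<rho> * norm w' \<le> t * norm w + t * norm w'"
      using that by (intro add_mono mult_right_mono) auto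
    also have "\<dots> = t * (norm u + norm v)"
      using \<open>{w, w'} = {u, v}\<close> by (auto simp: doubleton_eq_iff algebra_simps)
    also have "\<dots> < t * (norm u + norm v + 1)"
      using \<open>t > 0\<close> by simp
    also have "\<dots> = d"
      using \<open>norm u + norm v + 1 > 0\<close> by (simp add: t_def)
    finally show ?thesis using dist_add_two_scaled_le[of \<sigma> \<rho> x w w'] that by linarith
  qed
  obtain \<sigma> \<rho> where s1: "0 < \<sigma>" "\<sigma> < t" "0 < \<rho>" "\<rho> < t"
    and e1: "f (x + t *\<^sub>R u + t *\<^sub>R v) - f (x + t *\<^sub>R u) - f (x + t *\<^sub>R v) + f x
      = t * t * GA (x + \<sigma> *\<^sub>R u + \<rho> *\<^sub>R v) v"
    using mvt_second_difference[OF f A \<open>t > 0\<close>, of x v] by blast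
  obtain \<sigma>' \<rho>' where s2: "0 < \<sigma>'" "\<sigma>' < t" "0 < \<rho>'" "\<rho>' < t"
    and e2: "f (x + t *\<^sub>R v + t *\<^sub>R u) - f (x + t *\<^sub>R v) - f (x + t *\<^sub>R u) + f x
      = t * t * GB (x + \<sigma>' *\<^sub>R v + \<rho>' *\<^sub>R u) u"
    using mvt_second_difference[OF f B \<open>t > 0\<close>, of x u] by blast
  have "x + t *\<^sub>R v + t *\<^sub>R u = x + t *\<^sub>R u + t *\<^sub>R v" by (simp add: algebra_simps)
  with e1 e2 have "t * t * GA (x + \<sigma> *\<^sub>R u + \<rho> *\<^sub>R v) v = t * t * GB (x + \<sigma>' *\<^sub>R v + \<rho>' *\<^sub>R u) u"
    by (simp add: algebra_simps)
  with \<open>t > 0\<close> have eq: "GA (x + \<sigma> *\<^sub>R u + \<rho> *\<^sub>R v) v = GB (x + \<sigma>' *\<^sub>R v + \<rho>' *\<^sub>R u) u"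
    by simp
  have "dist (GA (x + \<sigma> *\<^sub>R u + \<rho> *\<^sub>R v) v) (GA x v) < e"
    using dA near[OF s1] by blast
  moreover have "dist (GB (x + \<sigma>' *\<^sub>R v + \<rho>' *\<^sub>R u) u) (GB x u) < e"
    using dB near[OF s2] by (simp add: insert_commute)
  ultimately show False using eq unfolding e_def dist_real_def by (simp add: abs_if split: if_splits)
qed

lemma smooth_fun_partials_commute:
  assumes "smooth_fun f" "b \<in> Basis" "c \<in> Basis"
  shows "frechet_derivative (\<lambda>y. frechet_derivative f (at y) b) (at x) c =
         frechet_derivative (\<lambda>y. frechet_derivative f (at y) c) (at x) b"
proof -
  have sb: "smooth_fun (\<lambda>y. frechet_derivative f (at y) b)" using smooth_fun_partial assms by blast
  have sc: "smooth_fun (\<lambda>y. frechet_derivative f (at y) c)" using smooth_fun_partial assms by blast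
  have sbc: "smooth_fun (\<lambda>z. frechet_derivative (\<lambda>y. frechet_derivative f (at y) b) (at z) c)"
    using smooth_fun_partial[OF sb assms(3)] .
  have scb: "smooth_fun (\<lambda>z. frechet_derivative (\<lambda>y. frechet_derivative f (at y) c) (at z) b)"
    using smooth_fun_partial[OF sc assms(2)] .
  show ?thesis
    by (rule partial_derivatives_commute[where f=f and F="\<lambda>y. frechet_derivative f (at y)"])
      (use smooth_fun_has_derivative[OF assms(1)] smooth_fun_has_derivative[OF sb]
        smooth_fun_has_derivative[OF sc] has_derivative_continuous[OF smooth_fun_has_derivative[OF sbc]]
        has_derivative_continuous[OF smooth_fun_has_derivative[OF scb]] in auto)
qed

section \<open>Gradient and Hessian\<close>

lemma linear_real_eq_sum_Basis:
  fixes L :: "'a::euclidean_space \<Rightarrow> real"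
  assumes "linear L" shows "(\<Sum>b\<in>Basis. L b * (b \<bullet> v)) = L v"
proof -
  have "L v = L (\<Sum>b\<in>Basis. (v \<bullet> b) *\<^sub>R b)" by (simp add: euclidean_representation)
  also have "\<dots> = (\<Sum>b\<in>Basis. (v \<bullet> b) * L b)"
    by (simp add: linear_sum[OF assms] linear_scale[OF assms])
  finally show ?thesis by (simp add: inner_commute mult.commute)
qed

lemma inner_grad_eq:
  assumes "(k has_derivative L) (at x)" shows "grad k x \<bullet> w = L w"
proof -
  have "frechet_derivative k (at x) = L" using assms frechet_derivative_at by metis
  moreover have "linear L" using assms has_derivative_linear by blast
  ultimately show ?thesis unfolding grad_def
    by (simp add: inner_sum_left linear_real_eq_sum_Basis)
qed

definition hessian :: "('a::euclidean_space \<Rightarrow> real) \<Rightarrow> 'a \<Rightarrow> 'a \<Rightarrow> 'a" where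
  "hessian g x w = (\<Sum>b\<in>Basis. frechet_derivative (\<lambda>y. frechet_derivative g (at y) b) (at x) w *\<^sub>R b)"

lemma has_derivative_grad:
  assumes "smooth_fun g" shows "(grad g has_derivative hessian g x) (at x)"
proof -
  have "grad g = (\<lambda>y. \<Sum>b\<in>Basis. frechet_derivative g (at y) b *\<^sub>R b)"
    by (simp add: grad_def fun_eq_iff)
  moreover have "((\<lambda>y. \<Sum>b\<in>Basis. frechet_derivative g (at y) b *\<^sub>R b) has_derivative hessian g x) (at x)"
    unfolding hessian_def
    by (intro has_derivative_sum has_derivative_scaleR_left smooth_fun_has_derivative smooth_fun_partial assms)
  ultimately show ?thesis by simp
qed

lemma hessian_symmetric:
  assumes "smooth_fun g" shows "u \<bullet> hessian g x w = w \<bullet> hessian g x u"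
proof -
  define M where "M b c = frechet_derivative (\<lambda>y. frechet_derivative g (at y) b) (at x) c" for b c
  have lin: "linear (M b)" if "b \<in> Basis" for b
    unfolding M_def using has_derivative_linear smooth_fun_has_derivative smooth_fun_partial assms that by blast
  have sym: "M b c = M c b" if "b \<in> Basis" "c \<in> Basis" for b c
    unfolding M_def using smooth_fun_partials_commute assms that by blast
  have e: "u \<bullet> hessian g x w = (\<Sum>b\<in>Basis. \<Sum>c\<in>Basis. M b c * (c \<bullet> w) * (u \<bullet> b))" for u w
  proof -
    have "u \<bullet> hessian g x w = (\<Sum>b\<in>Basis. M b w * (u \<bullet> b))"
      unfolding hessian_def M_def[symmetric] by (simp add: inner_sum_right)
    also have "\<dots> = (\<Sum>b\<in>Basis. \<Sum>c\<in>Basis. M b c * (c \<bullet> w) * (u \<bullet> b))"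
      by (rule sum.cong[OF refl]) (simp add: sum_distrib_right[symmetric] linear_real_eq_sum_Basis[OF lin])
    finally show ?thesis .
  qed
  have "u \<bullet> hessian g x w = (\<Sum>b\<in>Basis. \<Sum>c\<in>Basis. M b c * (c \<bullet> w) * (u \<bullet> b))" by (rule e)
  also have "\<dots> = (\<Sum>c\<in>Basis. \<Sum>b\<in>Basis. M b c * (c \<bullet> w) * (u \<bullet> b))" by (rule sum.swap)
  also have "\<dots> = (\<Sum>c\<in>Basis. \<Sum>b\<in>Basis. M c b * (b \<bullet> u) * (w \<bullet> c))"
    by (intro sum.cong refl) (simp add: sym inner_commute)
  also have "\<dots> = w \<bullet> hessian g x u" by (rule e[symmetric])
  finally show ?thesis .
qed

lemma grad_comp_add:
  fixes f :: "'a::euclidean_space \<Rightarrow> real"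
  assumes f: "(f has_derivative L) (at (fst z + snd z))"
  shows "grad (f \<circ> (\<lambda>pq. fst pq + snd pq)) z = (grad f (fst z + snd z), grad f (fst z + snd z))"
proof (rule vector_eq_rdot[THEN iffD1], intro allI)
  have "((\<lambda>pq::'a \<times> 'a. fst pq + snd pq) has_derivative (\<lambda>pq. fst pq + snd pq)) (at z)"
    by (auto intro!: derivative_eq_intros)
  then have D: "(f \<circ> (\<lambda>pq. fst pq + snd pq) has_derivative L \<circ> (\<lambda>pq. fst pq + snd pq)) (at z)"
    using diff_chain_at f by blast
  have "linear L" using f has_derivative_linear by blast
  then show "grad (f \<circ> (\<lambda>pq. fst pq + snd pq)) z \<bullet> w
      = (grad f (fst z + snd z), grad f (fst z + snd z)) \<bullet> w" for w
    using inner_grad_eq[OF D, of w] inner_grad_eq[OF f]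
    by (cases w) (simp add: linear_add)
qed

lemma grad_orthogonal_subspace:
  assumes "f differentiable (at c)" and "subspace C" and "\<forall>y\<in>C. f y = 0"
    and "c \<in> C" and "w \<in> C"
  shows "grad f c \<bullet> w = 0"
proof -
  obtain D where D: "(f has_derivative D) (at c)" using assms(1) differentiable_def by blast
  have "((\<lambda>s. c + s *\<^sub>R w) has_derivative (\<lambda>s. s *\<^sub>R w)) (at 0)"
    by (auto intro!: derivative_eq_intros)
  moreover have "(f has_derivative D) (at (c + 0 *\<^sub>R w))" using D by simp
  ultimately have "((\<lambda>s. f (c + s *\<^sub>R w)) has_derivative (\<lambda>s. D (s *\<^sub>R w))) (at 0)"
    by (rule has_derivative_compose)
  moreover have "(\<lambda>s. f (c + s *\<^sub>R w)) = (\<lambda>s. 0)"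
    using assms(2-5) by (simp add: subspace_add subspace_scale)
  ultimately have "(\<lambda>s::real. D (s *\<^sub>R w)) = (\<lambda>s. 0)"
    using has_derivative_unique has_derivative_const by metis
  then have "D w = 0" by (metis scaleR_one)
  then show ?thesis using inner_grad_eq[OF D] by simp
qed

section \<open>Lie algebras and Lie-Poisson structures\<close>

lemma lie_algebra_antisym:
  assumes "lie_algebra B"
  shows "B v u = - B u v"
proof -
  have bl: "bilinear B" and zero: "\<And>x. B x x = 0"
    using assms by (auto simp: lie_algebra_def)
  have "B (u + v) (u + v) = B u u + B v u + (B u v + B v v)"
    by (simp only: bilinear_ladd[OF bl] bilinear_radd[OF bl])
  then have "B u v + B v u = 0" using zero[of "u + v"] zero[of u] zero[of v] by (simp add: add.commute)
  then show ?thesis by (metis add_eq_0_iff)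
qed

lemmas bilinear_simps = bilinear_ladd bilinear_radd bilinear_lmul bilinear_rmul bilinear_lsub bilinear_rsub
  bilinear_lneg bilinear_rneg bilinear_lzero bilinear_rzero

lemma lie_algebra_semidirect_bracket:
  assumes lh: "lie_algebra bh" and lg: "lie_algebra bg" and br: "bilinear \<rho>"
    and rep: "\<And>x y a. \<rho> (bg x y) a = \<rho> x (\<rho> y a) - \<rho> y (\<rho> x a)"
    and der: "\<And>x a b. \<rho> x (bh a b) = bh (\<rho> x a) b + bh a (\<rho> x b)"
  shows "lie_algebra (semidirect_bracket bh bg \<rho>)"
proof -
  have bh: "bilinear bh" and bg: "bilinear bg"
    and jh: "\<And>x y z. bh x (bh y z) + bh y (bh z x) + bh z (bh x y) = 0"
    and jg: "\<And>x y z. bg x (bg y z) + bg y (bg z x) + bg z (bg x y) = 0"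
    and zh: "\<And>x. bh x x = 0" and zg: "\<And>x. bg x x = 0"
    using lh lg by (auto simp: lie_algebra_def)
  note simps = semidirect_bracket_def bilinear_simps[OF bh] bilinear_simps[OF bg]
    bilinear_simps[OF br]
  let ?S = "semidirect_bracket bh bg \<rho>"
  have "linear (?S u)" and "linear (\<lambda>u. ?S u v)" for u v
    by (rule linearI; auto simp: simps algebra_simps)+
  then have "bilinear ?S" by (simp add: bilinear_def)
  moreover have "?S u u = 0" for u by (simp add: semidirect_bracket_def zh zg zero_prod_def)
  moreover have "?S u (?S v w) + ?S v (?S w u) + ?S w (?S u v) = 0" for u v w
  proof -
    obtain a x b y c z where uvw: "u = (a, x)" "v = (b, y)" "w = (c, z)" by force
    have "bh c (bh a b) = - bh a (bh b c) - bh b (bh c a)"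
      using jh[of a b c] by (simp add: algebra_simps eq_neg_iff_add_eq_0)
    moreover have "bg z (bg x y) = - bg x (bg y z) - bg y (bg z x)"
      using jg[of x y z] by (simp add: algebra_simps eq_neg_iff_add_eq_0)
    moreover have "bh (\<rho> y c) a = - bh a (\<rho> y c)" and "bh c (\<rho> x b) = - bh (\<rho> x b) c"
      and "bh (\<rho> z a) b = - bh b (\<rho> z a)"
      using lie_algebra_antisym[OF lh] by blast+
    ultimately show ?thesis
      unfolding uvw by (simp add: simps rep der zero_prod_def algebra_simps)
  qed
  ultimately show ?thesis by (simp add: lie_algebra_def)
qed

lemma inner_adjoint_bracket:
  fixes B :: "'a::real_vector \<Rightarrow> 'b::euclidean_space \<Rightarrow> 'c::euclidean_space"
  assumes "bilinear B"
  shows "adjoint (B u) x \<bullet> v = x \<bullet> B u v"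
proof -
  have "linear (B u)" using assms by (simp add: bilinear_def)
  then show ?thesis using adjoint_works[of "B u" v x] by (simp add: inner_commute)
qed

lemma pbracket_lie_poisson: "pbracket (lie_poisson B) f g x = x \<bullet> B (grad f x) (grad g x)"
  by (simp add: pbracket_def lie_poisson_def)

lemma smooth_fun_pbracket_lie_poisson:
  assumes bl: "bilinear B" and f: "smooth_fun f" and g: "smooth_fun g"
  shows "smooth_fun (pbracket (lie_poisson B) f g)"
proof -
  let ?df = "\<lambda>y b. frechet_derivative f (at y) b" and ?dg = "\<lambda>y c. frechet_derivative g (at y) c"
  have expand: "pbracket (lie_poisson B) f g =
      (\<lambda>y. \<Sum>p\<in>Basis \<times> Basis. (?df y (fst p) * ?dg y (snd p)) * (y \<bullet> B (fst p) (snd p)))"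
  proof
    fix y
    have "pbracket (lie_poisson B) f g y =
        y \<bullet> (\<Sum>p\<in>Basis \<times> Basis. B (?df y (fst p) *\<^sub>R fst p) (?dg y (snd p) *\<^sub>R snd p))"
      unfolding pbracket_lie_poisson grad_def bilinear_sum[OF bl] by (simp add: case_prod_beta)
    also have "\<dots> = (\<Sum>p\<in>Basis \<times> Basis. (?df y (fst p) * ?dg y (snd p)) * (y \<bullet> B (fst p) (snd p)))"
      unfolding inner_sum_right bilinear_lmul[OF bl] bilinear_rmul[OF bl]
      by (simp add: mult.assoc mult.left_commute)
    finally show "pbracket (lie_poisson B) f g y = \<dots>" .
  qed
  have "linear (\<lambda>y. y \<bullet> B b c)" for b c
    by (rule linearI) (auto simp: inner_add_left)
  then show ?thesis
    unfolding expand
    by (intro smooth_fun_sum smooth_fun_mult smooth_fun_linear smooth_fun_partial f g) auto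
qed

lemma has_derivative_lie_poisson_bracket:
  assumes bl: "bilinear B" and g: "smooth_fun g" and h: "smooth_fun h"
  shows "((\<lambda>y. y \<bullet> B (grad g y) (grad h y)) has_derivative
     (\<lambda>w. x \<bullet> (B (grad g x) (hessian h x w) + B (hessian g x w) (grad h x))
        + w \<bullet> B (grad g x) (grad h x))) (at x)"
proof -
  have "bounded_bilinear B" using bl bilinear_conv_bounded_bilinear by blast
  then show ?thesis
    by (intro has_derivative_inner has_derivative_ident bounded_bilinear.FDERIV
        has_derivative_grad g h)
qed

text \<open>With the Hamiltonian vectors X k = ad*(grad k x) x, the nested bracket splits into
  a Lie-algebraic term and two Hessian terms; in the cyclic sum the former vanish by the Jacobi
  identity of B and the latter cancel by the symmetry of the Hessian.\<close>

lemma pbracket_lie_poisson_nested: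
  fixes x :: "'a::euclidean_space"
  assumes la: "lie_algebra B" and f: "smooth_fun f" and g: "smooth_fun g" and h: "smooth_fun h"
  defines "X k \<equiv> adjoint (B (grad k x)) x"
  shows "pbracket (lie_poisson B) f (pbracket (lie_poisson B) g h) x =
     x \<bullet> B (grad f x) (B (grad g x) (grad h x))
     + X g \<bullet> hessian h x (X f) - X h \<bullet> hessian g x (X f)"
proof -
  have bl: "bilinear B" using la by (simp add: lie_algebra_def)
  let ?k = "\<lambda>y. y \<bullet> B (grad g y) (grad h y)"
  have "pbracket (lie_poisson B) f (pbracket (lie_poisson B) g h) x = X f \<bullet> grad ?k x"
    by (simp add: pbracket_lie_poisson X_def inner_adjoint_bracket[OF bl] flip: pbracket_lie_poisson)
  also have "\<dots> = grad ?k x \<bullet> X f" by (rule inner_commute)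
  also have "\<dots> = x \<bullet> (B (grad g x) (hessian h x (X f)) + B (hessian g x (X f)) (grad h x))
      + X f \<bullet> B (grad g x) (grad h x)"
    by (rule inner_grad_eq[OF has_derivative_lie_poisson_bracket[OF bl g h]])
  also have "\<dots> = x \<bullet> B (grad f x) (B (grad g x) (grad h x))
      + X g \<bullet> hessian h x (X f) - X h \<bullet> hessian g x (X f)"
    using lie_algebra_antisym[OF la, of "hessian g x (X f)" "grad h x"]
    by (simp add: X_def inner_adjoint_bracket[OF bl] inner_add_right inner_diff_right)
  finally show ?thesis .
qed

lemma poisson_structure_lie_poisson:
  assumes la: "lie_algebra B"
  shows "poisson_structure (lie_poisson B)"
  unfolding poisson_structure_def
proof (intro conjI allI impI)
  have bl: "bilinear B" using la by (simp add: lie_algebra_def)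
  fix x
  have "linear (\<lambda>v. x \<bullet> B u v)" for u
    by (rule linearI) (simp_all add: bilinear_radd[OF bl] bilinear_rmul[OF bl] inner_add_right)
  moreover have "linear (\<lambda>u. x \<bullet> B u v)" for v
    by (rule linearI) (simp_all add: bilinear_ladd[OF bl] bilinear_lmul[OF bl] inner_add_right)
  ultimately show "bilinear (lie_poisson B x)" by (simp add: bilinear_def lie_poisson_def)
  show "lie_poisson B x u v = - lie_poisson B x v u" for u v
    unfolding lie_poisson_def using lie_algebra_antisym[OF la, of u v] by simp
next
  fix f g :: "'a \<Rightarrow> real"
  assume "smooth_fun f \<and> smooth_fun g"
  then show "smooth_fun (pbracket (lie_poisson B) f g)"
    using smooth_fun_pbracket_lie_poisson la by (auto simp: lie_algebra_def)
next
  fix f g h :: "'a \<Rightarrow> real" and x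
  assume "smooth_fun f \<and> smooth_fun g \<and> smooth_fun h"
  then have f: "smooth_fun f" and g: "smooth_fun g" and h: "smooth_fun h" by auto
  define X where "X k = adjoint (B (grad k x)) x" for k
  have "x \<bullet> B (grad f x) (B (grad g x) (grad h x)) + x \<bullet> B (grad g x) (B (grad h x) (grad f x))
      + x \<bullet> B (grad h x) (B (grad f x) (grad g x)) = 0"
    using la by (simp add: lie_algebra_def flip: inner_add_right)
  then show "pbracket (lie_poisson B) f (pbracket (lie_poisson B) g h) x
      + pbracket (lie_poisson B) g (pbracket (lie_poisson B) h f) x
      + pbracket (lie_poisson B) h (pbracket (lie_poisson B) f g) x = 0"
    unfolding pbracket_lie_poisson_nested[OF la f g h] pbracket_lie_poisson_nested[OF la g h f]
      pbracket_lie_poisson_nested[OF la h f g] X_def[symmetric]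
    using hessian_symmetric[OF f, of "X h" x "X g"] hessian_symmetric[OF g, of "X f" x "X h"]
      hessian_symmetric[OF h, of "X g" x "X f"]
    by linarith
qed

lemma poisson_map_add_lie_poisson:
  fixes B :: "'a::euclidean_space \<Rightarrow> 'a \<Rightarrow> 'a"
  shows "poisson_map (prod_bivector (lie_poisson B)) (lie_poisson B) (\<lambda>pq. fst pq + snd pq)"
  unfolding poisson_map_def
proof (intro allI impI)
  fix f g :: "'a \<Rightarrow> real" and x
  assume "smooth_fun f \<and> smooth_fun g"
  then have "(f has_derivative frechet_derivative f (at (fst x + snd x))) (at (fst x + snd x))"
    and "(g has_derivative frechet_derivative g (at (fst x + snd x))) (at (fst x + snd x))"
    by (auto intro: smooth_fun_has_derivative)
  then show "pbracket (prod_bivector (lie_poisson B)) (f \<circ> (\<lambda>pq. fst pq + snd pq))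
      (g \<circ> (\<lambda>pq. fst pq + snd pq)) x = pbracket (lie_poisson B) f g (fst x + snd x)"
    by (simp add: pbracket_def grad_comp_add prod_bivector_def lie_poisson_def inner_add_left)
qed

section \<open>The dual groupoid\<close>

lemma linear_lie_2group_dual:
  fixes \<phi> :: "'h::euclidean_space \<Rightarrow> 'g::euclidean_space"
  assumes "linear \<phi>"
  shows "linear_lie_2group
           (\<lambda>(\<alpha>, \<theta>). \<alpha> - adjoint \<phi> \<theta>)
           (\<lambda>(\<alpha>, \<theta>). \<alpha>)
           (\<lambda>\<alpha>. (\<alpha>, 0))
           (\<lambda>(\<alpha>, \<theta>) (\<alpha>', \<theta>'). (\<alpha>, \<theta> + \<theta>'))
           (\<lambda>(\<alpha>, \<theta>). (\<alpha> - adjoint \<phi> \<theta>, - \<theta>))"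
proof -
  have "linear (adjoint \<phi>)" using adjoint_linear[OF assms] .
  note adj = linear_add[OF this] linear_diff[OF this] linear_neg[OF this] linear_0[OF this]
    linear_scale[OF this]
  have "surj (\<lambda>(\<alpha>, \<theta>). \<alpha> - adjoint \<phi> \<theta>)" and "surj (\<lambda>(\<alpha>::'h, \<theta>::'g). \<alpha>)"
    by (metis (no_types) adj(4) case_prod_conv diff_zero surj_def)+
  then show ?thesis
    unfolding linear_lie_2group_def
    by (auto simp: adj split_beta algebra_simps intro!: linearI)
qed

definition dual_mult_graph :: "('h::euclidean_space \<Rightarrow> 'g::euclidean_space)
    \<Rightarrow> (('h \<times> 'g) \<times> ('h \<times> 'g) \<times> ('h \<times> 'g)) set" where
  "dual_mult_graph \<phi> = {((\<alpha>, \<theta>), (\<alpha> - adjoint \<phi> \<theta>, \<theta>'), (\<alpha>, \<theta> + \<theta>')) | \<alpha> \<theta> \<theta>'. True}"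

lemma dual_mult_graph_eq:
  "{(p, q, (\<lambda>(\<alpha>, \<theta>) (\<alpha>', \<theta>'). (\<alpha>, \<theta> + \<theta>')) p q) | p q.
      (\<lambda>(\<alpha>, \<theta>). \<alpha> - adjoint \<phi> \<theta>) p = (\<lambda>(\<alpha>, \<theta>). \<alpha>) q} = dual_mult_graph \<phi>"
  by (auto simp: dual_mult_graph_def split_beta)

lemma subspace_dual_mult_graph:
  fixes \<phi> :: "'h::euclidean_space \<Rightarrow> 'g::euclidean_space"
  assumes "linear \<phi>"
  shows "subspace (dual_mult_graph \<phi>)"
proof -
  define F :: "'h \<times> 'g \<times> 'g \<Rightarrow> ('h \<times> 'g) \<times> ('h \<times> 'g) \<times> ('h \<times> 'g)"
    where "F = (\<lambda>(\<alpha>, \<theta>, \<theta>'). ((\<alpha>, \<theta>), (\<alpha> - adjoint \<phi> \<theta>, \<theta>'), (\<alpha>, \<theta> + \<theta>')))"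
  have "linear (adjoint \<phi>)" using adjoint_linear[OF assms] .
  then have "linear F"
    by (intro linearI) (auto simp: F_def split_beta linear_add linear_scale algebra_simps)
  moreover have "dual_mult_graph \<phi> = F ` UNIV"
    by (auto simp: dual_mult_graph_def F_def image_iff)
  ultimately show ?thesis by (simp add: linear_subspace_image)
qed

lemma orthogonal_dual_mult_graph:
  fixes \<phi> :: "'h::euclidean_space \<Rightarrow> 'g::euclidean_space"
  assumes lp: "linear \<phi>" and orth: "\<forall>w\<in>dual_mult_graph \<phi>. u \<bullet> w = 0"
  shows "\<exists>a1 a2 x2. u = ((a1, \<phi> a2 + x2), (a2, x2), (- a1 - a2, - x2))"
proof -
  have o: "u \<bullet> ((\<alpha>, \<theta>), (\<alpha> - adjoint \<phi> \<theta>, \<theta>'), (\<alpha>, \<theta> + \<theta>')) = 0" for \<alpha> \<theta> \<theta>'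
    using orth by (auto simp: dual_mult_graph_def)
  have adj0: "adjoint \<phi> 0 = 0" using linear_0[OF adjoint_linear[OF lp]] .
  obtain a1 x1 a2 x2 a3 x3 where u: "u = ((a1, x1), (a2, x2), (a3, x3))" by (metis prod.collapse)
  have "k \<bullet> (a1 + a2 + a3) = 0" for k
    using o[of k 0 0] by (simp add: u adj0 inner_add_right inner_commute)
  then have "a1 + a2 + a3 = 0" by (metis inner_eq_zero_iff)
  then have a3: "a3 = - a1 - a2" by (simp add: algebra_simps eq_neg_iff_add_eq_0)
  have "k \<bullet> (x2 + x3) = 0" for k
    using o[of 0 0 k] by (simp add: u adj0 inner_add_right inner_commute)
  then have "x2 + x3 = 0" by (metis inner_eq_zero_iff)
  then have x3: "x3 = - x2" by (simp add: algebra_simps eq_neg_iff_add_eq_0)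
  have "k \<bullet> (x1 - \<phi> a2 + x3) = 0" for k
    using o[of 0 k 0] adjoint_works[OF lp, of a2 k]
    by (simp add: u inner_add_right inner_diff_right inner_commute)
  then have "x1 - \<phi> a2 + x3 = 0" by (metis inner_eq_zero_iff)
  then have "x1 = \<phi> a2 + x2" using x3 by (simp add: algebra_simps)
  then show ?thesis using u a3 x3 by blast
qed

lemma triple_bar_lie_poisson_conormal:
  assumes cm: "crossed_module bh bg \<phi> \<rho>"
  shows "triple_bar_bivector (lie_poisson (semidirect_bracket bh bg \<rho>))
     ((\<alpha>, \<theta>), (\<alpha> - adjoint \<phi> \<theta>, \<theta>'), (\<alpha>, \<theta> + \<theta>'))
     ((a1, \<phi> a2 + x2), (a2, x2), (- a1 - a2, - x2))
     ((b1, \<phi> b2 + y2), (b2, y2), (- b1 - b2, - y2)) = 0"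
proof -
  have lh: "lie_algebra bh" and lg: "lie_algebra bg" and bh: "bilinear bh" and bg: "bilinear bg"
    and br: "bilinear \<rho>" and lp: "linear \<phi>"
    and hom: "\<And>a b. \<phi> (bh a b) = bg (\<phi> a) (\<phi> b)"
    and pr: "\<And>x a. \<phi> (\<rho> x a) = bg x (\<phi> a)"
    and rp: "\<And>a b. \<rho> (\<phi> a) b = bh a b"
    using cm by (auto simp: crossed_module_def lie_algebra_def)
  have ad: "adjoint \<phi> t \<bullet> z = t \<bullet> \<phi> z" for t z
    using adjoint_works[OF lp, of z t] by (simp add: inner_commute)
  have a1: "bh b2 a1 = - bh a1 b2" using lie_algebra_antisym[OF lh] by blast
  have a2: "bg y2 (\<phi> a2) = - bg (\<phi> a2) y2" using lie_algebra_antisym[OF lg] by blast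
  show ?thesis
    by (simp add: triple_bar_bivector_def lie_poisson_def semidirect_bracket_def
        bilinear_simps[OF bh] bilinear_simps[OF bg] bilinear_simps[OF br] linear_add[OF lp]
        linear_diff[OF lp] linear_neg[OF lp] hom pr rp ad a1 a2 inner_add_right inner_diff_right
        inner_add_left inner_diff_left algebra_simps)
qed

lemma coisotropic_dual_mult_graph:
  assumes cm: "crossed_module bh bg \<phi> \<rho>"
  shows "coisotropic (triple_bar_bivector (lie_poisson (semidirect_bracket bh bg \<rho>)))
     (dual_mult_graph \<phi>)"
  unfolding coisotropic_def
proof (intro allI impI ballI)
  have lp: "linear \<phi>" using cm by (simp add: crossed_module_def)
  fix f g c
  assume fg: "smooth_fun f \<and> smooth_fun g \<and> (\<forall>c\<in>dual_mult_graph \<phi>. f c = 0)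
      \<and> (\<forall>c\<in>dual_mult_graph \<phi>. g c = 0)"
    and c: "c \<in> dual_mult_graph \<phi>"
  have conormal: "\<exists>a1 a2 x2. grad k c = ((a1, \<phi> a2 + x2), (a2, x2), (- a1 - a2, - x2))"
    if "smooth_fun k" and "\<forall>c\<in>dual_mult_graph \<phi>. k c = 0" for k
    using that c subspace_dual_mult_graph[OF lp]
    by (intro orthogonal_dual_mult_graph[OF lp] ballI grad_orthogonal_subspace)
      (auto intro: differentiableI smooth_fun_has_derivative)
  obtain a1 a2 x2 where u: "grad f c = ((a1, \<phi> a2 + x2), (a2, x2), (- a1 - a2, - x2))"
    using conormal fg by blast
  obtain b1 b2 y2 where v: "grad g c = ((b1, \<phi> b2 + y2), (b2, y2), (- b1 - b2, - y2))"
    using conormal fg by blast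
  obtain \<alpha> \<theta> \<theta>' where c': "c = ((\<alpha>, \<theta>), (\<alpha> - adjoint \<phi> \<theta>, \<theta>'), (\<alpha>, \<theta> + \<theta>'))"
    using c by (auto simp: dual_mult_graph_def)
  show "pbracket (triple_bar_bivector (lie_poisson (semidirect_bracket bh bg \<rho>))) f g c = 0"
    unfolding pbracket_def u v unfolding c' by (rule triple_bar_lie_poisson_conormal[OF cm])
qed

theorem mainTheorem5:
  fixes bh :: "'h::euclidean_space \<Rightarrow> 'h \<Rightarrow> 'h"
    and bg :: "'g::euclidean_space \<Rightarrow> 'g \<Rightarrow> 'g"
    and \<phi> :: "'h \<Rightarrow> 'g"
    and \<rho> :: "'g \<Rightarrow> 'h \<Rightarrow> 'h"
  assumes "crossed_module bh bg \<phi> \<rho>"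
  shows "linear_poisson_2group
           (\<lambda>(\<alpha>, \<theta>). \<alpha> - adjoint \<phi> \<theta>)
           (\<lambda>(\<alpha>, \<theta>). \<alpha>)
           (\<lambda>\<alpha>. (\<alpha>, 0))
           (\<lambda>(\<alpha>, \<theta>) (\<alpha>', \<theta>'). (\<alpha>, \<theta> + \<theta>'))
           (\<lambda>(\<alpha>, \<theta>). (\<alpha> - adjoint \<phi> \<theta>, - \<theta>))
           (lie_poisson (semidirect_bracket bh bg \<rho>))"
proof -
  have "linear \<phi>" using assms by (simp add: crossed_module_def)
  have lie: "lie_algebra (semidirect_bracket bh bg \<rho>)"
    using assms by (intro lie_algebra_semidirect_bracket) (auto simp: crossed_module_def)
  show ?thesis
    unfolding linear_poisson_2group_def dual_mult_graph_eq
    using linear_lie_2group_dual[OF \<open>linear \<phi>\<close>] poisson_structure_lie_poisson[OF lie]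
      coisotropic_dual_mult_graph[OF assms] poisson_map_add_lie_poisson
    by blast
qed

end
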